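(* For every input permutation, algorithm $\mathcal{D}^2\mathcal{I}$ executes its instruction 6 only at steps where $D_1$ (and $D_2$) is empty.
   Context: The $\mathfrak{D}^2\mathfrak{I}$ machine consists of two decreasing stacks $D_1,D_2$ followed in series by an increasing stack $I$. Elements of $D_1,D_2$ must be in decreasing order from top to bottom (top largest); elements of $I$ in increasing order from top to bottom (top smallest). Operations: $d_0$ pushes the next input element (called $Input$) into $D_1$; $d_1$ moves $Top(D_1)$ to $D_2$; $d_2$ moves $Top(D_2)$ to $I$; $d_3$ pops $Top(I)$ and appends it to the output. Any comparison involving an empty stack is considered true. Conditions: ($\alpha$) $Top(D_2)<Top(I)$; ($\beta$) $Top(D_2)<Top(D_1)$ and $Top(D_1)<Top(I)$; ($\gamma$) $Top(D_1)<Input$, $Input<Top(I)$, and the sequence of input elements from $Input$ up to the first input element larger than $Top(D_2)$ is increasing. Algorithm $\mathcal{D}^2\mathcal{I}$ repeatedly executes the first applicable instruction among: 1. if $Top(I)$ is the next element to be output, perform $d_3$; 2. if the elements contained in $D_1\cup D_2$ are exactly the next elements to be output, move them to the output in increasing order; 3. perform $d_1$ if it is legal and ($\beta$) holds; 4. perform $d_0$ if it is legal and ($\gamma$) holds; 5. perform $d_2$ if it is legal and ($\alpha$) holds; 6. otherwise perform $d_3$. *)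

theory Defs
  imports Main
begin

text \<open>Configuration of the D2I machine. Stacks are lists whose head is the top.
  The output is the list of elements output so far (in output order).\<close>

record config =
  inp  :: "nat list"
  D1   :: "nat list"
  D2   :: "nat list"
  Ist  :: "nat list"
  outp :: "nat list"

definition top :: "nat list \<Rightarrow> nat option" where
  "top xs = (case xs of [] \<Rightarrow> None | x # _ \<Rightarrow> Some x)"

text \<open>Strict comparison in which any comparison involving an empty stack
  (or exhausted input) is considered true.\<close>
fun lt :: "nat option \<Rightarrow> nat option \<Rightarrow> bool" where
  "lt (Some a) (Some b) = (a < b)"
| "lt _ _ = True"

text \<open>The input is a permutation of 1..n, to be sorted; the next element to be
  output is therefore (number of elements output so far) + 1.\<close>
definition next_out :: "config \<Rightarrow> nat" where
  "next_out s = length (outp s) + 1"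

definition init :: "nat list \<Rightarrow> config" where
  "init xs = \<lparr>inp = xs, D1 = [], D2 = [], Ist = [], outp = []\<rparr>"

definition finished :: "config \<Rightarrow> bool" where
  "finished s \<longleftrightarrow> inp s = [] \<and> D1 s = [] \<and> D2 s = [] \<and> Ist s = []"

definition op_d0 :: "config \<Rightarrow> config" where
  "op_d0 s = s\<lparr>inp := tl (inp s), D1 := hd (inp s) # D1 s\<rparr>"
definition op_d1 :: "config \<Rightarrow> config" where
  "op_d1 s = s\<lparr>D1 := tl (D1 s), D2 := hd (D1 s) # D2 s\<rparr>"
definition op_d2 :: "config \<Rightarrow> config" where
  "op_d2 s = s\<lparr>D2 := tl (D2 s), Ist := hd (D2 s) # Ist s\<rparr>"
definition op_d3 :: "config \<Rightarrow> config" where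
  "op_d3 s = s\<lparr>Ist := tl (Ist s), outp := outp s @ [hd (Ist s)]\<rparr>"

definition legal_d0 :: "config \<Rightarrow> bool" where
  "legal_d0 s \<longleftrightarrow> inp s \<noteq> [] \<and> lt (top (D1 s)) (top (inp s))"
definition legal_d1 :: "config \<Rightarrow> bool" where
  "legal_d1 s \<longleftrightarrow> D1 s \<noteq> [] \<and> lt (top (D2 s)) (top (D1 s))"
definition legal_d2 :: "config \<Rightarrow> bool" where
  "legal_d2 s \<longleftrightarrow> D2 s \<noteq> [] \<and> lt (top (D2 s)) (top (Ist s))"

definition cond_alpha :: "config \<Rightarrow> bool" where
  "cond_alpha s \<longleftrightarrow> lt (top (D2 s)) (top (Ist s))"
definition cond_beta :: "config \<Rightarrow> bool" where
  "cond_beta s \<longleftrightarrow> lt (top (D2 s)) (top (D1 s)) \<and> lt (top (D1 s)) (top (Ist s))"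

text \<open>The input segment from Input up to (and including) the first input
  element larger than Top(D2); the whole remaining input if there is none.\<close>
definition gamma_seg :: "config \<Rightarrow> nat list" where
  "gamma_seg s = (let p = takeWhile (\<lambda>x. \<not> lt (top (D2 s)) (Some x)) (inp s)
                  in p @ take 1 (drop (length p) (inp s)))"

definition cond_gamma :: "config \<Rightarrow> bool" where
  "cond_gamma s \<longleftrightarrow> lt (top (D1 s)) (top (inp s)) \<and> lt (top (inp s)) (top (Ist s))
     \<and> sorted_wrt (<) (gamma_seg s)"

definition guard1 :: "config \<Rightarrow> bool" where
  "guard1 s \<longleftrightarrow> Ist s \<noteq> [] \<and> hd (Ist s) = next_out s"
definition guard2 :: "config \<Rightarrow> bool" where
  "guard2 s \<longleftrightarrow> D1 s @ D2 s \<noteq> [] \<and>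
     set (D1 s @ D2 s) = {next_out s ..< next_out s + length (D1 s @ D2 s)}"

definition instr :: "config \<Rightarrow> nat" where
  "instr s = (if guard1 s then 1
              else if guard2 s then 2
              else if legal_d1 s \<and> cond_beta s then 3
              else if legal_d0 s \<and> cond_gamma s then 4
              else if legal_d2 s \<and> cond_alpha s then 5
              else 6)"

definition step :: "config \<Rightarrow> config" where
  "step s = (if finished s then s else
     (if instr s = 2 then s\<lparr>D1 := [], D2 := [], outp := outp s @ sort (D1 s @ D2 s)\<rparr>
      else if instr s = 3 then op_d1 s
      else if instr s = 4 then op_d0 s
      else if instr s = 5 then op_d2 s
      else op_d3 s))"  \<comment> \<open>instructions 1 and 6 both perform d3\<close>

definition run :: "nat list \<Rightarrow> nat \<Rightarrow> config" where
  "run xs k = (step ^^ k) (init xs)"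

end

theory Submission
  imports Defs
begin

text \<open>The elements of \<open>D\<^sub>1\<close> and \<open>D\<^sub>2\<close> stay below the top of \<open>I\<close> throughout the run. Hence
  whenever \<open>D\<^sub>2\<close> is nonempty, \<open>d\<^sub>2\<close> is legal and (\<open>\<alpha>\<close>) holds, so instruction 5 applies;
  and whenever \<open>D\<^sub>2\<close> is empty but \<open>D\<^sub>1\<close> is not, \<open>d\<^sub>1\<close> is legal and (\<open>\<beta>\<close>) holds, so
  instruction 3 applies. Instruction 6 is therefore only reached with both stacks empty.\<close>

definition config_inv :: "config \<Rightarrow> bool" where
  "config_inv s \<longleftrightarrow>
     distinct (inp s @ D1 s @ D2 s @ Ist s)
     \<and> sorted_wrt (>) (D1 s) \<and> sorted_wrt (>) (D2 s) \<and> sorted_wrt (<) (Ist s)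
     \<and> lt (top (D1 s)) (top (Ist s)) \<and> lt (top (D2 s)) (top (Ist s))"

lemma top_Nil [simp]: "top [] = None"
  and top_Cons [simp]: "top (x # xs) = Some x"
  by (simp_all add: top_def)

lemma config_inv_init: "distinct xs \<Longrightarrow> config_inv (init xs)"
  by (simp add: config_inv_def init_def)

lemma config_inv_op_d3: "config_inv s \<Longrightarrow> config_inv (op_d3 s)"
  unfolding config_inv_def op_d3_def
  by (cases "D1 s"; cases "D2 s"; cases "Ist s"; cases "tl (Ist s)") auto

lemma config_inv_op_d0:
  "config_inv s \<Longrightarrow> legal_d0 s \<Longrightarrow> cond_gamma s \<Longrightarrow> config_inv (op_d0 s)"
  unfolding config_inv_def op_d0_def legal_d0_def cond_gamma_def
  by (cases "inp s"; cases "D1 s"; cases "Ist s") auto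

lemma config_inv_op_d1:
  "config_inv s \<Longrightarrow> legal_d1 s \<Longrightarrow> cond_beta s \<Longrightarrow> config_inv (op_d1 s)"
  unfolding config_inv_def op_d1_def legal_d1_def cond_beta_def
  by (cases "D1 s"; cases "D2 s"; cases "Ist s"; cases "tl (D1 s)") auto

text \<open>Since instruction 3 was not applicable, \<open>Top(D\<^sub>1) < Top(D\<^sub>2)\<close>; this keeps \<open>D\<^sub>1\<close>
  below the new top of \<open>I\<close>. Distinctness rules out \<open>Top(D\<^sub>1) = Top(D\<^sub>2)\<close>.\<close>
lemma config_inv_op_d2:
  assumes "config_inv s" and "legal_d2 s" and "cond_alpha s"
    and "\<not> (legal_d1 s \<and> cond_beta s)"
  shows "config_inv (op_d2 s)"
  using assms unfolding config_inv_def op_d2_def legal_d2_def cond_alpha_def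
    legal_d1_def cond_beta_def
  by (cases "D1 s"; cases "D2 s"; cases "Ist s"; cases "tl (D2 s)") auto

lemma config_inv_step: "config_inv s \<Longrightarrow> config_inv (step s)"
proof -
  assume inv: "config_inv s"
  have "config_inv (s\<lparr>D1 := [], D2 := [], outp := outp s @ sort (D1 s @ D2 s)\<rparr>)"
    using inv by (auto simp: config_inv_def)
  with inv show ?thesis
    unfolding step_def instr_def
    by (auto intro: config_inv_op_d0 config_inv_op_d1 config_inv_op_d2 config_inv_op_d3)
qed

lemma config_inv_run: "distinct xs \<Longrightarrow> config_inv (run xs k)"
  by (induction k) (simp_all add: run_def config_inv_init config_inv_step)

lemma d2_applicable:
  "config_inv s \<Longrightarrow> D2 s \<noteq> [] \<Longrightarrow> legal_d2 s \<and> cond_alpha s"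
  by (simp add: config_inv_def legal_d2_def cond_alpha_def)

lemma d1_applicable:
  "config_inv s \<Longrightarrow> D1 s \<noteq> [] \<Longrightarrow> D2 s = [] \<Longrightarrow> legal_d1 s \<and> cond_beta s"
  by (simp add: config_inv_def legal_d1_def cond_beta_def)

lemma instr_6_stacks_empty:
  assumes "config_inv s" and "instr s = 6"
  shows "D1 s = [] \<and> D2 s = []"
proof -
  have no_d1: "\<not> (legal_d1 s \<and> cond_beta s)" and no_d2: "\<not> (legal_d2 s \<and> cond_alpha s)"
    using \<open>instr s = 6\<close> by (auto simp: instr_def split: if_splits)
  have "D2 s = []"
    using d2_applicable[OF \<open>config_inv s\<close>] no_d2 by blast
  moreover have "D1 s = []"
    using d1_applicable[OF \<open>config_inv s\<close> _ \<open>D2 s = []\<close>] no_d1 by blast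
  ultimately show ?thesis by simp
qed

theorem mainTheorem8:
  fixes xs :: "nat list" and k :: nat
  assumes "distinct xs" and "set xs = {1..length xs}"
    and "\<not> finished (run xs k)" and "instr (run xs k) = 6"
  shows "D1 (run xs k) = [] \<and> D2 (run xs k) = []"
  using instr_6_stacks_empty[OF config_inv_run[OF assms(1)] assms(4)] .

end
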